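(* Let $\varphi_1,\dots,\varphi_t$ be finitely many inertial endomorphisms of an abelian group $A$ of finite torsion-free rank, let $T$ be the torsion subgroup of $A$, suppose each $\varphi_i$ induces on $A/T$ multiplication by $\frac{m_i}{n_i}$ with $m_i,n_i$ coprime integers, and let $\pi=\pi(n_1\cdots n_t)$. Then there is a $\mathbb{Z}[\varphi_1,\dots,\varphi_t]$-submodule $V$ of $A$ with $V\cong\mathbb{Q}^\pi\oplus\dots\oplus\mathbb{Q}^\pi$ ($r$ summands, for some $r\in\mathbb{N}$) such that $A/V$ is periodic.
   Context: Abelian groups are written additively. An endomorphism $\varphi$ of $A$ is inertial if $(\varphi(X)+X)/X$ is finite for every subgroup $X\le A$. A $\mathbb{Z}[\varphi_1,\dots,\varphi_t]$-submodule is a subgroup invariant under every $\varphi_i$. For the torsion-free group $A/T$, "$\varphi_i$ induces multiplication by $\frac{m_i}{n_i}$" means $n_i\bar\varphi_i(x)=m_ix$ for all $x\in A/T$. $\pi(n)$ is the set of prime divisors of $n$ and $\mathbb{Q}^\pi$ is the ring of rationals whose denominators are products of primes in $\pi$. *)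

theory Defs
  imports Complex_Main "HOL-Computational_Algebra.Primes"
begin

definition nmul :: "nat \<Rightarrow> 'a::ab_group_add \<Rightarrow> 'a" where
  "nmul n x = (\<Sum>_<n. x)"

definition imul :: "int \<Rightarrow> 'a::ab_group_add \<Rightarrow> 'a" where
  "imul k x = (if k \<ge> 0 then nmul (nat k) x else - nmul (nat (- k)) x)"

definition subgrp :: "'a::ab_group_add set \<Rightarrow> bool" where
  "subgrp X \<longleftrightarrow> 0 \<in> X \<and> (\<forall>x\<in>X. \<forall>y\<in>X. x + y \<in> X) \<and> (\<forall>x\<in>X. - x \<in> X)"

definition is_endo :: "('a::ab_group_add \<Rightarrow> 'a) \<Rightarrow> bool" where
  "is_endo f \<longleftrightarrow> (\<forall>x y. f (x + y) = f x + f y)"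

text \<open>(phi(X)+X)/X is finite for every subgroup X: the set of cosets of X
  contained in phi(X)+X is finite.\<close>
definition inertial :: "('a::ab_group_add \<Rightarrow> 'a) \<Rightarrow> bool" where
  "inertial f \<longleftrightarrow> (\<forall>X. subgrp X \<longrightarrow>
      finite {(\<lambda>x. y + x) ` X | y. \<exists>a\<in>X. \<exists>b\<in>X. y = f a + b})"

definition torsion :: "'a::ab_group_add set" where
  "torsion = {a. \<exists>n>0. nmul n a = 0}"

definition zindep :: "'a::ab_group_add set \<Rightarrow> bool" where
  "zindep S \<longleftrightarrow> (\<forall>c :: 'a \<Rightarrow> int. (\<Sum>s\<in>S. imul (c s) s) = 0 \<longrightarrow> (\<forall>s\<in>S. imul (c s) s = 0))"

definition finite_tf_rank :: "'a::ab_group_add itself \<Rightarrow> bool" where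
  "finite_tf_rank _ \<longleftrightarrow> (\<exists>N::nat. \<forall>S :: 'a set. finite S \<and> S \<inter> torsion = {} \<and> zindep S
      \<longrightarrow> card S \<le> N)"

text \<open>The additive group Q^pi, pi given as a predicate on (nat) primes.\<close>
definition Qpi :: "(nat \<Rightarrow> bool) \<Rightarrow> rat set" where
  "Qpi P = {q. \<forall>p::nat. prime p \<and> int p dvd snd (quotient_of q) \<longrightarrow> P p}"

text \<open>Direct sum of r copies of Q^pi, as functions supported on {..<r}.\<close>
definition Qpi_pow :: "(nat \<Rightarrow> bool) \<Rightarrow> nat \<Rightarrow> (nat \<Rightarrow> rat) set" where
  "Qpi_pow P r = {v. (\<forall>i<r. v i \<in> Qpi P) \<and> (\<forall>i\<ge>r. v i = 0)}"

definition grp_iso_to :: "(nat \<Rightarrow> rat) set \<Rightarrow> ('a::ab_group_add) set \<Rightarrow> bool" where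
  "grp_iso_to B V \<longleftrightarrow> (\<exists>f. bij_betw f B V \<and> (\<forall>x\<in>B. \<forall>y\<in>B. f (\<lambda>i. x i + y i) = f x + f y))"

end

theory Submission
  imports Defs
begin

text \<open>Put \<open>M = n\<^sub>1 \<cdots> n\<^sub>t\<close>. By Bezout each \<open>\<phi>\<^sub>i\<close> yields an endomorphism
  \<open>u\<^sub>i \<phi>\<^sub>i + v\<^sub>i\<close> acting as \<open>1/n\<^sub>i\<close> on \<open>A/T\<close>, and their composite \<open>\<theta>\<close> satisfies
  \<open>M \<theta> \<equiv> 1\<close> modulo \<open>T\<close>. Scaling a maximal independent system \<open>b\<^sub>1, \<dots>, b\<^sub>r\<close> suitably
  gives elements with \<open>M \<theta>(E\<^sub>i) = E\<^sub>i\<close>, so \<open>\<theta>\<close> divides their span by \<open>M\<close>, and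
  \<open>q \<mapsto> \<theta>\<^sup>J(\<Sum> M\<^sup>J q\<^sub>i E\<^sub>i)\<close> embeds \<open>(\<rat>\<^sup>\<pi>)\<^sup>r\<close> as a torsion-free, \<open>M\<close>-divisible
  subgroup \<open>U\<close> with \<open>A/U\<close> periodic. As \<open>\<phi>\<^sub>i\<close> acts as \<open>m\<^sub>i/n\<^sub>i\<close> modulo \<open>T\<close> and \<open>U\<close> is
  \<open>n\<^sub>i\<close>-divisible, \<open>\<phi>\<^sub>i\<close> maps each \<open>x \<in> U\<close> to an element of \<open>U\<close> plus an element of
  \<open>(\<phi>\<^sub>i(U) + U) \<inter> T\<close>, a finite set because \<open>\<phi>\<^sub>i\<close> is inertial and \<open>U\<close> is torsion-free.
  A multiple \<open>V = eU\<close> with \<open>e\<close> killing these finitely many torsion elements is invariant.\<close>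

lemma nmul_0 [simp]: "nmul 0 x = 0"
  by (simp add: nmul_def)

lemma nmul_Suc: "nmul (Suc k) x = x + nmul k x"
  by (simp add: nmul_def add.commute)

lemma nmul_Suc_0 [simp]: "nmul (Suc 0) x = x"
  by (simp add: nmul_def)

lemma nmul_add_left: "nmul (a + b) x = nmul a x + nmul b x"
  by (induction a) (simp_all add: nmul_Suc add.assoc)

lemma nmul_add: "nmul k (x + y) = nmul k x + nmul k y"
  by (induction k) (simp_all add: nmul_Suc algebra_simps)

lemma nmul_zero [simp]: "nmul k 0 = 0"
  by (induction k) (simp_all add: nmul_Suc)

lemma nmul_minus: "nmul k (- x) = - nmul k x"
  by (induction k) (simp_all add: nmul_Suc algebra_simps)

lemma nmul_diff: "nmul k (x - y) = nmul k x - nmul k y"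
  using nmul_add[of k x "- y"] by (simp add: nmul_minus)

lemma nmul_mult: "nmul (a * b) x = nmul a (nmul b x)"
  by (induction a) (simp_all add: nmul_Suc nmul_add_left)

lemma nmul_sum: "nmul k (sum f A) = (\<Sum>i\<in>A. nmul k (f i))"
  by (induction A rule: infinite_finite_induct) (simp_all add: nmul_add)

lemma nmul_eq_0_dvd: "nmul a x = 0 \<Longrightarrow> a dvd b \<Longrightarrow> nmul b x = 0"
  by (metis dvd_def mult.commute nmul_mult nmul_zero)

lemma imul_of_nat [simp]: "imul (int k) x = nmul k x"
  by (simp add: imul_def)

lemma imul_eq_nmul_diff: "imul k x = nmul (nat k) x - nmul (nat (- k)) x"
  by (simp add: imul_def)

lemma imul_0 [simp]: "imul 0 x = 0"
  by (simp add: imul_def)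

lemma imul_1 [simp]: "imul 1 x = x"
  by (simp add: imul_def nmul_Suc)

lemma imul_of_nat_diff: "imul (int p - int q) x = nmul p x - nmul q x"
proof (cases "q \<le> p")
  case True
  then have "imul (int p - int q) x = nmul (p - q) x"
    by (simp add: of_nat_diff [symmetric] del: of_nat_diff)
  also have "\<dots> = nmul p x - nmul q x"
    using nmul_add_left[of "p - q" q x] True by simp
  finally show ?thesis .
next
  case False
  then have "nat (- (int p - int q)) = q - p" "\<not> int p - int q \<ge> 0"
    by simp_all
  moreover have "nmul (q - p) x = nmul q x - nmul p x"
    using nmul_add_left[of "q - p" p x] False by simp
  ultimately show ?thesis
    by (simp add: imul_def)
qed

lemma imul_add_left: "imul (a + b) x = imul a x + imul b x"
proof -
  have "a + b = int (nat a + nat b) - int (nat (- a) + nat (- b))"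
    by simp
  then have "imul (a + b) x = nmul (nat a + nat b) x - nmul (nat (- a) + nat (- b)) x"
    by (metis imul_of_nat_diff)
  then show ?thesis
    by (simp add: imul_eq_nmul_diff[of a] imul_eq_nmul_diff[of b] nmul_add_left)
qed

lemma imul_minus_left: "imul (- a) x = - imul a x"
  using imul_add_left[of a "- a" x] by (simp add: eq_neg_iff_add_eq_0 add.commute)

lemma imul_diff_left: "imul (a - b) x = imul a x - imul b x"
  using imul_add_left[of a "- b" x] by (simp add: imul_minus_left)

lemma imul_add: "imul k (x + y) = imul k x + imul k y"
  by (simp add: imul_eq_nmul_diff nmul_add algebra_simps)

lemma imul_zero [simp]: "imul k 0 = 0"
  by (simp add: imul_eq_nmul_diff)

lemma imul_minus: "imul k (- x) = - imul k x"
  by (simp add: imul_eq_nmul_diff nmul_minus algebra_simps)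

lemma imul_diff: "imul k (x - y) = imul k x - imul k y"
  by (simp add: imul_eq_nmul_diff nmul_diff algebra_simps)

lemma imul_nmul: "imul k (nmul p x) = nmul p (imul k x)"
  by (simp add: imul_eq_nmul_diff nmul_diff nmul_mult [symmetric] mult.commute)

lemma imul_mult: "imul (a * b) x = imul a (imul b x)"
proof -
  have of_nat_mult: "imul (int p * b) x = nmul p (imul b x)" for p
    by (induction p) (simp_all add: nmul_Suc imul_add_left algebra_simps)
  have "a * b = int (nat a) * b - int (nat (- a)) * b"
    by (simp add: left_diff_distrib [symmetric])
  then show ?thesis
    by (simp only: imul_diff_left of_nat_mult imul_eq_nmul_diff[of a "imul b x"])
qed

lemma imul_commute: "imul a (imul b x) = imul b (imul a x)"
  by (metis imul_mult mult.commute)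

lemma imul_sum: "imul k (sum f A) = (\<Sum>i\<in>A. imul k (f i))"
  by (induction A rule: infinite_finite_induct) (simp_all add: imul_add)

lemma endo_0: "is_endo f \<Longrightarrow> f 0 = 0"
  unfolding is_endo_def by (metis add_cancel_right_right)

lemma endo_add: "is_endo f \<Longrightarrow> f (x + y) = f x + f y"
  unfolding is_endo_def by blast

lemma endo_minus: "is_endo f \<Longrightarrow> f (- x) = - f x"
  by (metis add.right_inverse endo_0 endo_add minus_unique)

lemma endo_diff: "is_endo f \<Longrightarrow> f (x - y) = f x - f y"
  using endo_add[of f x "- y"] by (simp add: endo_minus)

lemma endo_nmul: "is_endo f \<Longrightarrow> f (nmul k x) = nmul k (f x)"
  by (induction k) (simp_all add: nmul_Suc endo_add endo_0)

lemma endo_imul: "is_endo f \<Longrightarrow> f (imul k x) = imul k (f x)"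
  by (simp add: imul_eq_nmul_diff endo_diff endo_nmul)

lemma endo_comp: "is_endo f \<Longrightarrow> is_endo g \<Longrightarrow> is_endo (f \<circ> g)"
  unfolding is_endo_def by simp

lemma endo_sum: "is_endo f \<Longrightarrow> f (sum g A) = (\<Sum>i\<in>A. f (g i))"
  by (induction A rule: infinite_finite_induct) (simp_all add: endo_add endo_0)

lemma endo_funpow: "is_endo f \<Longrightarrow> is_endo (f ^^ k)"
  by (induction k) (simp_all add: is_endo_def)

lemma torsion_iff: "x \<in> torsion \<longleftrightarrow> (\<exists>k>0. nmul k x = 0)"
  by (simp add: torsion_def)

lemma zero_in_torsion [simp]: "0 \<in> torsion"
  unfolding torsion_def by (auto intro!: exI[of _ 1])

lemma torsion_add: "x \<in> torsion \<Longrightarrow> y \<in> torsion \<Longrightarrow> x + y \<in> torsion"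
proof -
  assume "x \<in> torsion" "y \<in> torsion"
  then obtain a b where ab: "a > 0" "nmul a x = 0" "b > 0" "nmul b y = 0"
    unfolding torsion_def by blast
  have "nmul (a * b) x = 0" "nmul (a * b) y = 0"
    using ab(2,4) by (simp_all add: nmul_eq_0_dvd[of a x] nmul_eq_0_dvd[of b y])
  then have "nmul (a * b) (x + y) = 0"
    by (simp add: nmul_add)
  moreover have "a * b > 0"
    using ab by simp
  ultimately show ?thesis
    unfolding torsion_def by blast
qed

lemma torsion_minus: "x \<in> torsion \<Longrightarrow> - x \<in> torsion"
  unfolding torsion_def by (auto simp: nmul_minus)

lemma torsion_diff: "x \<in> torsion \<Longrightarrow> y \<in> torsion \<Longrightarrow> x - y \<in> torsion"
  using torsion_add[of x "- y"] by (simp add: torsion_minus)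

lemma torsion_imul: "x \<in> torsion \<Longrightarrow> imul k x \<in> torsion"
  unfolding torsion_def by (auto simp: imul_nmul [symmetric])

lemma imul_eq_0_nmul_abs: "imul k x = 0 \<Longrightarrow> nmul (nat \<bar>k\<bar>) x = 0"
  by (cases "k \<ge> 0") (auto simp: imul_def)

lemma torsion_imul_cancel:
  assumes "imul k x \<in> torsion" "k \<noteq> 0"
  shows "x \<in> torsion"
proof -
  obtain a where a: "a > 0" "nmul a (imul k x) = 0"
    using assms(1) unfolding torsion_def by blast
  from a(2) have "imul (int a * k) x = 0"
    by (simp add: imul_mult)
  then have "nmul (nat \<bar>int a * k\<bar>) x = 0"
    by (rule imul_eq_0_nmul_abs)
  moreover have "nat \<bar>int a * k\<bar> > 0"
    using a(1) assms(2) by (simp add: abs_mult)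
  ultimately show ?thesis
    unfolding torsion_iff by blast
qed

lemma finite_torsion_annihilator:
  assumes "finite S" "S \<subseteq> torsion"
  obtains e where "e > 0" "\<And>x. x \<in> S \<Longrightarrow> nmul e x = 0"
proof -
  have "\<forall>x\<in>S. \<exists>k. k > 0 \<and> nmul k x = 0"
    using assms(2) unfolding torsion_def by blast
  from bchoice[OF this] obtain ord where ord: "\<forall>x\<in>S. ord x > 0 \<and> nmul (ord x) x = 0"
    by blast
  show ?thesis
  proof
    show "(\<Prod>x\<in>S. ord x) > 0"
      using ord by (intro prod_pos) blast
    show "nmul (\<Prod>x\<in>S. ord x) x = 0" if "x \<in> S" for x
    proof (rule nmul_eq_0_dvd)
      show "nmul (ord x) x = 0"
        using ord that by blast
      show "ord x dvd (\<Prod>x\<in>S. ord x)"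
        using assms(1) that by (rule dvd_prodI)
    qed
  qed
qed

lemma nmul_abs_eq_imul_sgn: "nmul (nat \<bar>z\<bar>) a = imul (sgn z) (imul z a)"
proof -
  have "sgn z * z = int (nat \<bar>z\<bar>)"
    by (cases z "0::int" rule: linorder_cases) simp_all
  then show ?thesis
    by (metis imul_mult imul_of_nat)
qed

section \<open>Groups of finite torsion-free rank\<close>

lemma ex_maximal_zindep:
  assumes "finite_tf_rank TYPE('a::ab_group_add)"
  obtains S :: "'a::ab_group_add set" where "finite S" "S \<inter> torsion = {}" "zindep S"
    and "\<And>a. a \<notin> torsion \<Longrightarrow> a \<notin> S \<Longrightarrow> \<not> zindep (insert a S)"
proof -
  define SS where "SS = {S :: 'a set. finite S \<and> S \<inter> torsion = {} \<and> zindep S}"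
  obtain N where N: "\<And>S. S \<in> SS \<Longrightarrow> card S \<le> N"
    using assms unfolding finite_tf_rank_def SS_def by blast
  have "{} \<in> SS"
    unfolding SS_def zindep_def by simp
  have fin: "finite (card ` SS)"
    using N by (meson finite_atMost finite_subset image_subset_iff atMost_iff)
  obtain S where S: "S \<in> SS" and S_max: "\<And>S'. S' \<in> SS \<Longrightarrow> card S' \<le> card S"
    using Max_in[OF fin] Max_ge[OF fin] \<open>{} \<in> SS\<close> by (metis empty_iff image_iff)
  show ?thesis
  proof (rule that)
    show "finite S" "S \<inter> torsion = {}" "zindep S"
      using S unfolding SS_def by auto
    show "\<not> zindep (insert a S)" if "a \<notin> torsion" "a \<notin> S" for a
      using S_max[of "insert a S"] that \<open>finite S\<close> \<open>S \<inter> torsion = {}\<close>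
      unfolding SS_def by auto
  qed
qed

lemma maximal_zindep_spans:
  assumes "finite S" "zindep S" "\<And>a. a \<notin> torsion \<Longrightarrow> a \<notin> S \<Longrightarrow> \<not> zindep (insert a S)"
  shows "\<exists>k>0. \<exists>c. nmul k a = (\<Sum>s\<in>S. imul (c s) s)"
proof -
  consider "a \<in> torsion" | "a \<in> S" | "a \<notin> torsion" "a \<notin> S"
    by blast
  then show ?thesis
  proof cases
    case 1
    then obtain k where "k > 0" "nmul k a = 0"
      unfolding torsion_def by blast
    then show ?thesis
      by (intro exI[of _ k] conjI exI[of _ "\<lambda>_. 0"]) simp_all
  next
    case 2
    have "(\<Sum>s\<in>S. imul (if s = a then 1 else 0) s) = (\<Sum>s\<in>S. if s = a then s else 0)"
      by (intro sum.cong) auto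
    with 2 \<open>finite S\<close> have "nmul 1 a = (\<Sum>s\<in>S. imul (if s = a then 1 else 0) s)"
      by simp
    then show ?thesis
      by (intro exI[of _ 1] conjI exI[of _ "\<lambda>s. if s = a then 1 else 0"]) simp_all
  next
    case 3
    then obtain c where rel: "(\<Sum>s\<in>insert a S. imul (c s) s) = 0"
      and nontriv: "\<exists>s\<in>insert a S. imul (c s) s \<noteq> 0"
      using assms(3) unfolding zindep_def by blast
    have rel': "imul (c a) a = - (\<Sum>s\<in>S. imul (c s) s)"
      using rel 3 \<open>finite S\<close> by (simp add: eq_neg_iff_add_eq_0)
    then have "imul (c a) a \<noteq> 0"
      using assms(2) nontriv unfolding zindep_def by auto
    then have "nat \<bar>c a\<bar> > 0"
      by (cases "c a = 0") simp_all
    moreover have "nmul (nat \<bar>c a\<bar>) a = (\<Sum>s\<in>S. imul (- sgn (c a) * c s) s)"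
      by (simp add: nmul_abs_eq_imul_sgn rel' imul_minus imul_sum imul_mult imul_minus_left sum_negf)
    ultimately show ?thesis
      by (intro exI[of _ "nat \<bar>c a\<bar>"] conjI exI[of _ "\<lambda>s. - sgn (c a) * c s"])
  qed
qed

lemma tf_rank_basis:
  assumes "finite_tf_rank TYPE('a::ab_group_add)"
  obtains b :: "nat \<Rightarrow> 'a::ab_group_add" and r
  where "\<And>c. (\<Sum>i<r. imul (c i) (b i)) = 0 \<Longrightarrow> \<forall>i<r. c i = 0"
    and "\<And>a. \<exists>k>0. \<exists>c. nmul k a = (\<Sum>i<r. imul (c i) (b i))"
proof -
  obtain S :: "'a set" where "finite S" and S_tf: "S \<inter> torsion = {}" and S_indep: "zindep S"
    and S_max: "\<And>a. a \<notin> torsion \<Longrightarrow> a \<notin> S \<Longrightarrow> \<not> zindep (insert a S)"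
    using ex_maximal_zindep[OF assms] by blast
  define r where "r = card S"
  obtain b where b: "bij_betw b {..<r} S"
    using ex_bij_betw_nat_finite[OF \<open>finite S\<close>] unfolding r_def atLeast0LessThan by blast
  have reindex: "(\<Sum>s\<in>S. imul (c s) s) = (\<Sum>i<r. imul (c (b i)) (b i))" for c
    using sum.reindex_bij_betw[OF b, of "\<lambda>s. imul (c s) s"] by simp
  show ?thesis
  proof
    fix c :: "nat \<Rightarrow> int"
    assume rel: "(\<Sum>i<r. imul (c i) (b i)) = 0"
    define c' where "c' s = c (inv_into {..<r} b s)" for s
    have c'b: "c' (b i) = c i" if "i < r" for i
      unfolding c'_def using b that by (simp add: bij_betw_def)
    have "(\<Sum>s\<in>S. imul (c' s) s) = 0"
      using rel by (simp add: reindex c'b)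
    then have "imul (c i) (b i) = 0" if "i < r" for i
      using S_indep b that c'b unfolding zindep_def bij_betw_def by force
    moreover have "b i \<notin> torsion" if "i < r" for i
      using S_tf b that unfolding bij_betw_def by blast
    ultimately show "\<forall>i<r. c i = 0"
      by (metis torsion_imul_cancel zero_in_torsion)
  next
    fix a
    obtain k c where "k > 0" "nmul k a = (\<Sum>s\<in>S. imul (c s) s)"
      using maximal_zindep_spans[OF \<open>finite S\<close> S_indep S_max] by blast
    then show "\<exists>k>0. \<exists>c. nmul k a = (\<Sum>i<r. imul (c i) (b i))"
      unfolding reindex by (intro exI[of _ k] conjI exI[of _ "\<lambda>i. c (b i)"]) simp_all
  qed
qed

lemma dvd_power_if_prime_factors_dvd:
  fixes M :: int
  assumes "d > 0" "\<And>p::nat. prime p \<Longrightarrow> p dvd d \<Longrightarrow> int p dvd M"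
  shows "int d dvd M ^ d"
  using assms
proof (induction d rule: less_induct)
  case (less d)
  show ?case
  proof (cases "d = 1")
    case False
    then obtain p where p: "prime p" "p dvd d"
      using prime_factor_nat by blast
    then obtain c where c: "d = p * c"
      by blast
    have "c < d" "c > 0"
      using c less.prems(1) prime_ge_2_nat[OF p(1)] by auto
    then have "int c dvd M ^ c"
      using less c by simp
    then have "int p * int c dvd M * M ^ c"
      using less.prems(2) p by (intro mult_dvd_mono) auto
    then have "int d dvd M ^ Suc c"
      using c by simp
    then show ?thesis
      using \<open>c < d\<close> by (meson Suc_leI dvd_trans le_imp_power_dvd)
  qed simp
qed

lemma Qpi_iff_power_mult_in_Ints:
  fixes M :: int
  assumes "M \<noteq> 0"
  shows "q \<in> Qpi (\<lambda>p. prime p \<and> int p dvd M) \<longleftrightarrow> (\<exists>J. of_int (M ^ J) * q \<in> \<int>)"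
proof -
  obtain a d where ad: "quotient_of q = (a, d)"
    by (cases "quotient_of q")
  have "d > 0" "coprime a d" "q = of_int a / of_int d"
    using ad quotient_of_denom_pos quotient_of_coprime quotient_of_div by blast+
  show ?thesis
  proof
    assume "q \<in> Qpi (\<lambda>p. prime p \<and> int p dvd M)"
    then have "int p dvd M" if "prime p" "p dvd nat d" for p
      using that \<open>d > 0\<close> ad unfolding Qpi_def by (auto simp flip: int_dvd_int_iff)
    then have "int (nat d) dvd M ^ nat d"
      using \<open>d > 0\<close> by (intro dvd_power_if_prime_factors_dvd) auto
    then obtain k where "M ^ nat d = d * k"
      using \<open>d > 0\<close> by auto
    then have "of_int (M ^ nat d) * q = of_int (k * a)"
      using \<open>d > 0\<close> \<open>q = of_int a / of_int d\<close> by (simp add: field_simps)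
    then show "\<exists>J. of_int (M ^ J) * q \<in> \<int>"
      by (metis Ints_of_int)
  next
    assume "\<exists>J. of_int (M ^ J) * q \<in> \<int>"
    then obtain J z where "of_int (M ^ J) * q = (of_int z :: rat)"
      by (auto elim!: Ints_cases)
    then have "of_int (M ^ J * a) = (of_int (z * d) :: rat)"
      using \<open>d > 0\<close> \<open>q = of_int a / of_int d\<close> by (simp add: field_simps)
    then have "d dvd M ^ J * a"
      by (metis dvd_triv_right of_int_eq_iff)
    then have "d dvd M ^ J"
      using \<open>coprime a d\<close> by (simp add: coprime_dvd_mult_left_iff coprime_commute)
    have "int p dvd M" if "prime p" "int p dvd d" for p
    proof -
      have "int p dvd M ^ J"
        using that(2) \<open>d dvd M ^ J\<close> by (rule dvd_trans)
      moreover have "prime (int p)"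
        using that(1) by simp
      ultimately show ?thesis
        using prime_dvd_power by blast
    qed
    then show "q \<in> Qpi (\<lambda>p. prime p \<and> int p dvd M)"
      unfolding Qpi_def using ad by auto
  qed
qed

section \<open>Inverting multiplication by \<open>M\<close> modulo torsion\<close>

lemma inverse_mod_torsion_of_coprime:
  fixes f :: "'a::ab_group_add \<Rightarrow> 'a" and m n :: int
  assumes "is_endo f" "coprime m n" "\<And>x. imul n (f x) - imul m x \<in> torsion"
  obtains d :: "'a \<Rightarrow> 'a" where "is_endo d" "\<And>x. imul n (d x) - x \<in> torsion"
proof -
  obtain u v where uv: "u * m + v * n = 1"
    using bezout_int[of m n] assms(2) by (auto simp: coprime_iff_gcd_eq_1)
  \<comment> \<open>modulo torsion \<open>n d = u (n f) + v n = u m + v n = 1\<close>\<close>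
  define d where "d x = imul u (f x) + imul v x" for x
  show ?thesis
  proof (rule that[of d])
    show "is_endo d"
      unfolding is_endo_def d_def using assms(1) by (simp add: endo_add imul_add ac_simps)
  next
    fix x :: 'a
    have eq: "imul u (imul m x) + imul v (imul n x) = x"
      using uv by (metis imul_1 imul_add_left imul_mult)
    have cancel: "a + b = y \<Longrightarrow> c + b - y = c - a" for a b c y :: 'a
      by (auto simp: algebra_simps)
    have "imul u (imul n (f x)) + imul v (imul n x) - x = imul u (imul n (f x) - imul m x)"
      using cancel[OF eq] by (simp add: imul_diff)
    moreover have "imul n (d x) = imul u (imul n (f x)) + imul v (imul n x)"
      unfolding d_def by (simp add: imul_add imul_commute[of n])
    ultimately have "imul n (d x) - x = imul u (imul n (f x) - imul m x)"
      by simp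
    then show "imul n (d x) - x \<in> torsion"
      using assms(3) by (simp add: torsion_imul)
  qed
qed

lemma inverse_mod_torsion_mult:
  assumes "\<And>x. imul a (d x) - x \<in> torsion" "\<And>x. imul b (d' x) - x \<in> torsion"
  shows "imul (a * b) (d (d' x)) - x \<in> torsion"
proof -
  have "imul (a * b) (d (d' x)) - x = imul b (imul a (d (d' x)) - d' x) + (imul b (d' x) - x)"
    by (simp add: imul_mult imul_diff imul_commute[of a])
  then show ?thesis
    using torsion_add[OF torsion_imul[OF assms(1)] assms(2)] by (simp add: add_diff_eq)
qed

lemma ex_inverse_mod_torsion_of_prod:
  fixes phi :: "nat \<Rightarrow> 'a::ab_group_add \<Rightarrow> 'a" and t :: nat
  assumes "\<And>i. i < t \<Longrightarrow> is_endo (phi i)"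
    and "\<And>i. i < t \<Longrightarrow> coprime (m i) (n i)"
    and "\<And>i x. i < t \<Longrightarrow> imul (n i) (phi i x) - imul (m i) x \<in> torsion"
  shows "\<exists>th :: 'a \<Rightarrow> 'a. is_endo th \<and> (\<forall>x. imul (\<Prod>i<t. n i) (th x) - x \<in> torsion)"
  using assms
proof (induction t)
  case 0
  have "is_endo id"
    by (simp add: is_endo_def)
  then show ?case
    by auto
next
  case (Suc t)
  have "\<exists>th :: 'a \<Rightarrow> 'a. is_endo th \<and> (\<forall>x. imul (\<Prod>i<t. n i) (th x) - x \<in> torsion)"
    using Suc.IH Suc.prems by (metis less_SucI)
  then obtain th :: "'a \<Rightarrow> 'a" where th: "is_endo th" "\<And>x. imul (\<Prod>i<t. n i) (th x) - x \<in> torsion"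
    by blast
  have phi_t: "is_endo (phi t)" "coprime (m t) (n t)"
    "\<And>x. imul (n t) (phi t x) - imul (m t) x \<in> torsion"
    by (simp_all add: Suc.prems)
  obtain d :: "'a \<Rightarrow> 'a" where d: "is_endo d" "\<And>x. imul (n t) (d x) - x \<in> torsion"
    using inverse_mod_torsion_of_coprime[OF phi_t] by blast
  have "imul (\<Prod>i<Suc t. n i) ((th \<circ> d) x) - x \<in> torsion" for x
    using inverse_mod_torsion_mult[OF th(2) d(2)] by simp
  then show ?case
    using endo_comp[OF th(1) d(1)] by blast
qed

section \<open>Embedding \<open>(\<rat>\<^sup>\<pi>)\<^sup>r\<close>\<close>

lemma power_mult_in_Ints_mono:
  fixes M :: int and x :: rat
  assumes "of_int (M ^ J) * x \<in> \<int>" "J \<le> J'"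
  shows "of_int (M ^ J') * x \<in> \<int>"
proof -
  have "M ^ J' = M ^ (J' - J) * M ^ J"
    using assms(2) by (simp add: power_add [symmetric])
  then have "of_int (M ^ J') * x = of_int (M ^ (J' - J)) * (of_int (M ^ J) * x)"
    by (metis mult.assoc of_int_mult)
  then show ?thesis
    using assms(1) Ints_mult Ints_of_int by metis
qed

locale Qpi_embedding =
  fixes th :: "'a::ab_group_add \<Rightarrow> 'a" and M :: int and r :: nat and E :: "nat \<Rightarrow> 'a"
  assumes endo: "is_endo th"
    and M_nonzero: "M \<noteq> 0"
    and E_fixed: "\<And>i. i < r \<Longrightarrow> imul M (th (E i)) = E i"
    and E_indep: "\<And>c. (\<Sum>i<r. imul (c i) (E i)) = 0 \<Longrightarrow> \<forall>i<r. c i = 0"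
begin

definition comb :: "(nat \<Rightarrow> int) \<Rightarrow> 'a" where
  "comb c = (\<Sum>i<r. imul (c i) (E i))"

definition clears :: "nat \<Rightarrow> (nat \<Rightarrow> rat) \<Rightarrow> bool" where
  "clears J q \<longleftrightarrow> (\<forall>i<r. of_int (M ^ J) * q i \<in> \<int>)"

definition coef :: "nat \<Rightarrow> (nat \<Rightarrow> rat) \<Rightarrow> nat \<Rightarrow> int" where
  "coef J q i = \<lfloor>of_int (M ^ J) * q i\<rfloor>"

text \<open>Since \<open>th\<close> inverts multiplication by \<open>M\<close> on the span of the \<open>E\<^sub>i\<close>, the value
  \<open>th\<^sup>J(\<Sum> M\<^sup>J q\<^sub>i E\<^sub>i)\<close> does not depend on the exponent \<open>J\<close> clearing the denominators
  of \<open>q\<close> (lemma \<open>emb_eq\<close>); for \<open>q\<close> outside \<open>QP\<close> the value of \<open>emb\<close> is junk.\<close>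
definition emb :: "(nat \<Rightarrow> rat) \<Rightarrow> 'a" where
  "emb q = (let J = SOME J. clears J q in (th ^^ J) (comb (coef J q)))"

abbreviation QP :: "(nat \<Rightarrow> rat) set" where
  "QP \<equiv> Qpi_pow (\<lambda>p. prime p \<and> int p dvd M) r"

lemma comb_lincomb: "comb (\<lambda>i. a * c i + b * d i) = imul a (comb c) + imul b (comb d)"
  unfolding comb_def by (simp add: imul_add_left imul_mult imul_sum sum.distrib)

lemma comb_mult: "comb (\<lambda>i. k * c i) = imul k (comb c)"
  using comb_lincomb[of k c 0 c] by simp

lemma comb_cong: "(\<And>i. i < r \<Longrightarrow> c i = d i) \<Longrightarrow> comb c = comb d"
  unfolding comb_def by (intro sum.cong) auto

lemma comb_eq_iff: "comb c = comb d \<longleftrightarrow> (\<forall>i<r. c i = d i)"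
proof
  assume "comb c = comb d"
  then have "(\<Sum>i<r. imul (c i - d i) (E i)) = 0"
    unfolding comb_def by (simp add: imul_diff_left sum_subtractf)
  then show "\<forall>i<r. c i = d i"
    using E_indep by fastforce
qed (rule comb_cong, blast)

lemma th_imul_M_comb: "th (imul M (comb c)) = comb c"
proof -
  have "th (imul M (comb c)) = (\<Sum>i<r. imul (c i) (imul M (th (E i))))"
    unfolding comb_def using endo by (simp add: endo_sum endo_imul imul_sum imul_commute[of M])
  also have "\<dots> = comb c"
    unfolding comb_def by (intro sum.cong) (simp_all add: E_fixed)
  finally show ?thesis .
qed

lemma thpow_imul_power_comb: "(th ^^ k) (imul (M ^ k) (comb c)) = comb c"
proof (induction k arbitrary: c)
  case (Suc k)
  have "(th ^^ Suc k) (imul (M ^ Suc k) (comb c)) = (th ^^ k) (th (imul M (comb (\<lambda>i. M ^ k * c i))))"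
    by (simp add: comb_mult imul_mult funpow_Suc_right del: funpow.simps)
  also have "\<dots> = comb c"
    by (simp only: th_imul_M_comb) (simp add: comb_mult Suc.IH)
  finally show ?case .
qed simp

lemma clears_mono: "clears J q \<Longrightarrow> J \<le> J' \<Longrightarrow> clears J' q"
  unfolding clears_def using power_mult_in_Ints_mono by blast

lemma of_int_coef:
  assumes "clears J q" "i < r"
  shows "of_int (coef J q i) = of_int (M ^ J) * q i"
proof -
  have "of_int (M ^ J) * q i \<in> \<int>"
    using assms unfolding clears_def by blast
  then show ?thesis
    unfolding coef_def by (metis Ints_cases floor_of_int)
qed

lemma thpow_comb_coef_stable:
  assumes "clears J q"
  shows "(th ^^ (J + k)) (comb (coef (J + k) q)) = (th ^^ J) (comb (coef J q))"
proof -
  have "coef (J + k) q i = M ^ k * coef J q i" if "i < r" for i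
  proof -
    have "clears (J + k) q"
      using assms by (rule clears_mono) simp
    then have "(of_int (coef (J + k) q i) :: rat) = of_int (M ^ k * coef J q i)"
      using of_int_coef[OF assms that] of_int_coef[OF _ that, of "J + k"]
      by (simp add: power_add mult_ac)
    then show ?thesis
      by (simp only: of_int_eq_iff)
  qed
  then have "comb (coef (J + k) q) = imul (M ^ k) (comb (coef J q))"
    using comb_cong comb_mult by metis
  then show ?thesis
    by (simp add: funpow_add thpow_imul_power_comb)
qed

lemma emb_eq:
  assumes "clears J q"
  shows "emb q = (th ^^ J) (comb (coef J q))"
proof -
  have value_eq: "(th ^^ J) (comb (coef J q)) = (th ^^ J') (comb (coef J' q))"
    if "clears J q" "clears J' q" for J J'
  proof (cases "J \<le> J'")
    case True
    then show ?thesis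
      using thpow_comb_coef_stable[OF that(1), of "J' - J"] by simp
  next
    case False
    then show ?thesis
      using thpow_comb_coef_stable[OF that(2), of "J - J'"] by simp
  qed
  have "clears (SOME J. clears J q) q"
    using assms by (rule someI)
  then show ?thesis
    unfolding emb_def Let_def by (rule value_eq[OF _ assms])
qed

lemma QP_iff: "q \<in> QP \<longleftrightarrow> (\<exists>J. clears J q) \<and> (\<forall>i\<ge>r. q i = 0)"
proof
  assume q: "q \<in> QP"
  have "\<forall>i\<in>{..<r}. \<exists>J. of_int (M ^ J) * q i \<in> \<int>"
  proof
    fix i assume "i \<in> {..<r}"
    then have "q i \<in> Qpi (\<lambda>p. prime p \<and> int p dvd M)"
      using q unfolding Qpi_pow_def by simp
    then show "\<exists>J. of_int (M ^ J) * q i \<in> \<int>"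
      by (rule Qpi_iff_power_mult_in_Ints[OF M_nonzero, THEN iffD1])
  qed
  from bchoice[OF this] obtain Jf where Jf: "\<forall>i\<in>{..<r}. of_int (M ^ Jf i) * q i \<in> \<int>" ..
  have "clears (\<Sum>i<r. Jf i) q"
    unfolding clears_def
  proof (intro allI impI)
    fix i assume "i < r"
    then have "Jf i \<le> (\<Sum>i<r. Jf i)"
      by (intro member_le_sum) simp_all
    then show "of_int (M ^ (\<Sum>i<r. Jf i)) * q i \<in> \<int>"
      using Jf \<open>i < r\<close> power_mult_in_Ints_mono by blast
  qed
  then show "(\<exists>J. clears J q) \<and> (\<forall>i\<ge>r. q i = 0)"
    using q unfolding Qpi_pow_def by blast
next
  assume "(\<exists>J. clears J q) \<and> (\<forall>i\<ge>r. q i = 0)"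
  then show "q \<in> QP"
    unfolding Qpi_pow_def clears_def using Qpi_iff_power_mult_in_Ints[OF M_nonzero] by blast
qed

lemma QP_common_clears:
  assumes "q1 \<in> QP" "q2 \<in> QP"
  obtains J where "clears J q1" "clears J q2"
  using assms unfolding QP_iff by (meson clears_mono max.cobounded1 max.cobounded2)

lemma clears_lincomb:
  assumes "clears J q1" "clears J q2"
  shows "clears J (\<lambda>i. of_int a * q1 i + of_int b * q2 i)"
  using assms unfolding clears_def by (simp add: distrib_left mult.left_commute Ints_add Ints_mult)

lemma QP_lincomb:
  assumes "q1 \<in> QP" "q2 \<in> QP"
  shows "(\<lambda>i. of_int a * q1 i + of_int b * q2 i) \<in> QP"
proof -
  obtain J where "clears J q1" "clears J q2"
    using assms by (rule QP_common_clears)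
  then have "clears J (\<lambda>i. of_int a * q1 i + of_int b * q2 i)"
    by (rule clears_lincomb)
  then show ?thesis
    using assms unfolding QP_iff by auto
qed

lemma coef_lincomb:
  assumes "clears J q1" "clears J q2" "i < r"
  shows "coef J (\<lambda>i. of_int a * q1 i + of_int b * q2 i) i = a * coef J q1 i + b * coef J q2 i"
proof -
  have "(of_int (coef J (\<lambda>i. of_int a * q1 i + of_int b * q2 i) i) :: rat)
      = of_int (a * coef J q1 i + b * coef J q2 i)"
    using of_int_coef[OF clears_lincomb[OF assms(1,2)] assms(3)]
      of_int_coef[OF assms(1,3)] of_int_coef[OF assms(2,3)]
    by (simp add: algebra_simps)
  then show ?thesis
    by (simp only: of_int_eq_iff)
qed

lemma emb_lincomb:
  assumes "q1 \<in> QP" "q2 \<in> QP"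
  shows "emb (\<lambda>i. of_int a * q1 i + of_int b * q2 i) = imul a (emb q1) + imul b (emb q2)"
proof -
  obtain J where J: "clears J q1" "clears J q2"
    using assms by (rule QP_common_clears)
  have "emb (\<lambda>i. of_int a * q1 i + of_int b * q2 i)
      = (th ^^ J) (comb (coef J (\<lambda>i. of_int a * q1 i + of_int b * q2 i)))"
    by (rule emb_eq[OF clears_lincomb[OF J]])
  also have "comb (coef J (\<lambda>i. of_int a * q1 i + of_int b * q2 i))
      = comb (\<lambda>i. a * coef J q1 i + b * coef J q2 i)"
    using coef_lincomb[OF J] by (rule comb_cong)
  also have "(th ^^ J) \<dots> = imul a (emb q1) + imul b (emb q2)"
    using endo_funpow[OF endo, of J]
    by (simp add: emb_eq[OF J(1)] emb_eq[OF J(2)] comb_lincomb endo_add endo_imul)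
  finally show ?thesis .
qed

lemma emb_zero: "emb (\<lambda>_. 0) = 0"
proof -
  have "clears 0 (\<lambda>_. 0)"
    unfolding clears_def by simp
  then show ?thesis
    using emb_eq by (simp add: coef_def comb_def)
qed

lemma imul_power_thpow_comb: "imul (M ^ k) ((th ^^ k) (comb c)) = comb c"
  using endo_imul[OF endo_funpow[OF endo], of k "M ^ k" "comb c"] thpow_imul_power_comb by simp

lemma inj_on_emb: "inj_on emb QP"
proof
  fix q1 q2 assume q: "q1 \<in> QP" "q2 \<in> QP" and eq: "emb q1 = emb q2"
  obtain J where J: "clears J q1" "clears J q2"
    using q by (rule QP_common_clears)
  have "comb (coef J q1) = comb (coef J q2)"
    using eq imul_power_thpow_comb[of J] by (metis emb_eq J)
  then have "of_int (M ^ J) * q1 i = of_int (M ^ J) * q2 i" if "i < r" for i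
    using that of_int_coef[OF J(1) that] of_int_coef[OF J(2) that] comb_eq_iff by metis
  then have "q1 i = q2 i" if "i < r" for i
    using that M_nonzero by simp
  moreover have "q1 i = q2 i" if "\<not> i < r" for i
    using q that unfolding QP_iff by simp
  ultimately show "q1 = q2"
    by blast
qed

lemma comb_in_emb_image: "comb c \<in> emb ` QP"
proof -
  define q :: "nat \<Rightarrow> rat" where "q i = (if i < r then of_int (c i) else 0)" for i
  have "clears 0 q"
    unfolding clears_def q_def by simp
  then have "q \<in> QP" "emb q = comb c"
    by (auto simp: QP_iff q_def emb_eq[OF \<open>clears 0 q\<close>] coef_def intro: comb_cong)
  then show ?thesis
    by (metis image_eqI)
qed

lemma subgrp_emb_image: "subgrp (emb ` QP)"
  unfolding subgrp_def
proof (intro conjI ballI)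
  have "(\<lambda>_. 0) \<in> QP"
    unfolding QP_iff clears_def by simp
  with emb_zero [symmetric] show "0 \<in> emb ` QP"
    by (rule image_eqI)
next
  fix x y assume "x \<in> emb ` QP" "y \<in> emb ` QP"
  then obtain q1 q2 where q: "q1 \<in> QP" "q2 \<in> QP" and "x = emb q1" "y = emb q2"
    by blast
  then have "x + y = emb (\<lambda>i. of_int 1 * q1 i + of_int 1 * q2 i)"
    using emb_lincomb[OF q, of 1 1] by simp
  moreover have "(\<lambda>i. of_int 1 * q1 i + of_int 1 * q2 i) \<in> QP"
    using q by (rule QP_lincomb)
  ultimately show "x + y \<in> emb ` QP"
    by (rule image_eqI)
next
  fix x assume "x \<in> emb ` QP"
  then obtain q where q: "q \<in> QP" and "x = emb q"
    by blast
  then have "- x = emb (\<lambda>i. of_int (- 1) * q i + of_int 0 * q i)"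
    using emb_lincomb[OF q q, of "- 1" 0] by (simp add: imul_minus_left)
  moreover have "(\<lambda>i. of_int (- 1) * q i + of_int 0 * q i) \<in> QP"
    using q q by (rule QP_lincomb)
  ultimately show "- x \<in> emb ` QP"
    by (rule image_eqI)
qed

lemma grp_iso_to_emb_image: "grp_iso_to QP (emb ` QP)"
  unfolding grp_iso_to_def bij_betw_def
  using inj_on_emb emb_lincomb[of _ _ 1 1] by (intro exI[of _ emb]) simp

lemma emb_image_torsion_free: "emb ` QP \<inter> torsion = {0}"
proof -
  have "x = 0" if x: "x \<in> emb ` QP" "x \<in> torsion" for x
  proof -
    obtain q where q: "q \<in> QP" "x = emb q"
      using x(1) by blast
    obtain k where k: "k > 0" "nmul k x = 0"
      using x(2) unfolding torsion_def by blast
    have "emb (\<lambda>i. of_int (int k) * q i + of_int 0 * q i) = emb (\<lambda>_. 0)"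
      using emb_lincomb[OF q(1) q(1), of "int k" 0] k q(2) emb_zero by simp
    moreover have "(\<lambda>_. 0) \<in> QP"
      unfolding QP_iff clears_def by simp
    ultimately have "(\<lambda>i. of_int (int k) * q i + of_int 0 * q i) = (\<lambda>_. 0)"
      using inj_on_emb QP_lincomb[OF q(1) q(1)] by (meson inj_onD)
    then have "q = (\<lambda>_. 0)"
      using k(1) by (auto simp: fun_eq_iff)
    then show ?thesis
      using q(2) emb_zero by simp
  qed
  moreover have "0 \<in> emb ` QP"
    using subgrp_emb_image unfolding subgrp_def by blast
  ultimately show ?thesis
    by auto
qed

lemma emb_image_divisible:
  assumes "x \<in> emb ` QP"
  shows "\<exists>w\<in>emb ` QP. imul M w = x"
proof -
  obtain q where q: "q \<in> QP" "x = emb q"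
    using assms by blast
  define q' where "q' i = q i / of_int M" for i
  obtain J where "clears J q"
    using q(1) unfolding QP_iff by blast
  then have "clears (Suc J) q'"
    unfolding clears_def q'_def using M_nonzero by simp
  then have "q' \<in> QP"
    using q(1) unfolding QP_iff q'_def by auto
  moreover have "q = (\<lambda>i. of_int M * q' i + of_int 0 * q' i)"
    using M_nonzero by (simp add: q'_def fun_eq_iff)
  ultimately have "imul M (emb q') = x"
    using emb_lincomb[of q' q' M 0] q(2) by simp
  then show ?thesis
    using \<open>q' \<in> QP\<close> by blast
qed

end

lemma tf_rank_basis_fixed:
  fixes th :: "'a::ab_group_add \<Rightarrow> 'a"
  assumes rank: "finite_tf_rank TYPE('a)"
    and endo: "is_endo th"
    and inverse: "\<And>x. imul M (th x) - x \<in> torsion"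
  obtains E :: "nat \<Rightarrow> 'a" and r
  where "\<And>i. i < r \<Longrightarrow> imul M (th (E i)) = E i"
    and "\<And>c. (\<Sum>i<r. imul (c i) (E i)) = 0 \<Longrightarrow> \<forall>i<r. c i = 0"
    and "\<And>a. \<exists>k>0. \<exists>c. nmul k a = (\<Sum>i<r. imul (c i) (E i))"
proof -
  obtain b :: "nat \<Rightarrow> 'a" and r
    where indep: "\<And>c. (\<Sum>i<r. imul (c i) (b i)) = 0 \<Longrightarrow> \<forall>i<r. c i = 0"
      and span: "\<And>a. \<exists>k>0. \<exists>c. nmul k a = (\<Sum>i<r. imul (c i) (b i))"
    by (rule tf_rank_basis[OF rank], rule that)
  have "finite ((\<lambda>i. imul M (th (b i)) - b i) ` {..<r})"
    "(\<lambda>i. imul M (th (b i)) - b i) ` {..<r} \<subseteq> torsion"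
    using inverse by auto
  then obtain e where "e > 0" and e: "\<And>i. i < r \<Longrightarrow> nmul e (imul M (th (b i)) - b i) = 0"
    by (rule finite_torsion_annihilator) blast
  show ?thesis
  proof (rule that[of r "\<lambda>i. nmul e (b i)"])
    show "imul M (th (nmul e (b i))) = nmul e (b i)" if "i < r" for i
      using e[OF that] endo by (simp add: nmul_diff endo_nmul imul_nmul)
    show "\<forall>i<r. c i = 0" if "(\<Sum>i<r. imul (c i) (nmul e (b i))) = 0" for c
    proof -
      have "(\<Sum>i<r. imul (c i * int e) (b i)) = 0"
        using that by (simp add: imul_mult)
      then show ?thesis
        using indep[of "\<lambda>i. c i * int e"] \<open>e > 0\<close> by simp
    qed
    show "\<exists>k>0. \<exists>c. nmul k a = (\<Sum>i<r. imul (c i) (nmul e (b i)))" for a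
    proof -
      obtain k c where "k > 0" "nmul k a = (\<Sum>i<r. imul (c i) (b i))"
        using span by blast
      then have "nmul (e * k) a = (\<Sum>i<r. imul (c i) (nmul e (b i)))"
        by (simp add: nmul_mult nmul_sum imul_nmul)
      moreover have "e * k > 0"
        using \<open>e > 0\<close> \<open>k > 0\<close> by simp
      ultimately show ?thesis
        by (intro exI[of _ "e * k"] conjI exI[of _ c])
    qed
  qed
qed

lemma ex_torsion_free_Qpi_subgroup:
  fixes th :: "'a::ab_group_add \<Rightarrow> 'a"
  assumes rank: "finite_tf_rank TYPE('a)"
    and endo: "is_endo th" and "M \<noteq> 0"
    and inverse: "\<And>x. imul M (th x) - x \<in> torsion"
  obtains U :: "'a set" and r
  where "subgrp U" "grp_iso_to (Qpi_pow (\<lambda>p. prime p \<and> int p dvd M) r) U"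
    and "U \<inter> torsion = {0}"
    and "\<And>x. x \<in> U \<Longrightarrow> \<exists>w\<in>U. imul M w = x"
    and "\<And>a. \<exists>k>0. nmul k a \<in> U"
proof -
  obtain E :: "nat \<Rightarrow> 'a" and r
    where fixed: "\<And>i. i < r \<Longrightarrow> imul M (th (E i)) = E i"
      and indep: "\<And>c. (\<Sum>i<r. imul (c i) (E i)) = 0 \<Longrightarrow> \<forall>i<r. c i = 0"
      and span: "\<And>a. \<exists>k>0. \<exists>c. nmul k a = (\<Sum>i<r. imul (c i) (E i))"
    by (rule tf_rank_basis_fixed[OF rank endo inverse], rule that)
  interpret Qpi_embedding th M r E
    using endo \<open>M \<noteq> 0\<close> fixed indep by unfold_locales
  show ?thesis
  proof (rule that[of "emb ` QP" r])
    show "subgrp (emb ` QP)" "grp_iso_to QP (emb ` QP)" "emb ` QP \<inter> torsion = {0}"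
      by (rule subgrp_emb_image, rule grp_iso_to_emb_image, rule emb_image_torsion_free)
    show "\<exists>w\<in>emb ` QP. imul M w = x" if "x \<in> emb ` QP" for x
      using that by (rule emb_image_divisible)
    show "\<exists>k>0. nmul k a \<in> emb ` QP" for a
      using span[of a] comb_in_emb_image unfolding comb_def by metis
  qed
qed

section \<open>Invariance under inertial endomorphisms\<close>

lemma subgrp_imul: "subgrp U \<Longrightarrow> x \<in> U \<Longrightarrow> imul k x \<in> U"
proof -
  assume U: "subgrp U" and "x \<in> U"
  have "nmul j x \<in> U" for j
    using U \<open>x \<in> U\<close> unfolding subgrp_def by (induction j) (simp_all add: nmul_Suc)
  then show ?thesis
    using U unfolding subgrp_def imul_def by simp
qed

lemma divisible_by_divisor:
  assumes "subgrp U" "\<And>x. x \<in> U \<Longrightarrow> \<exists>w\<in>U. imul M w = x" "n dvd M" "x \<in> U"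
  shows "\<exists>w\<in>U. imul n w = imul m x"
proof -
  obtain w where "w \<in> U" "imul M w = x"
    using assms(2,4) by blast
  obtain l where "M = n * l"
    using assms(3) by blast
  have "imul n (imul (l * m) w) = imul m (imul M w)"
    unfolding \<open>M = n * l\<close> imul_mult [symmetric] by (simp add: mult_ac)
  then have "imul n (imul (l * m) w) = imul m x"
    using \<open>imul M w = x\<close> by simp
  then show ?thesis
    using subgrp_imul[OF assms(1) \<open>w \<in> U\<close>] by blast
qed

lemma inertial_finite_torsion_translates:
  assumes "inertial f" "subgrp U" "U \<inter> torsion = {0}"
  shows "finite {x \<in> torsion. \<exists>a\<in>U. \<exists>b\<in>U. x = f a + b}"
    (is "finite ?D")
proof -
  define coset where "coset y = (\<lambda>x. y + x) ` U" for y
  have "coset ` ?D \<subseteq> {(\<lambda>x. y + x) ` U | y. \<exists>a\<in>U. \<exists>b\<in>U. y = f a + b}"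
    unfolding coset_def by blast
  moreover have "finite {(\<lambda>x. y + x) ` U | y. \<exists>a\<in>U. \<exists>b\<in>U. y = f a + b}"
    using assms(1,2) unfolding inertial_def by blast
  ultimately have "finite (coset ` ?D)"
    by (rule finite_subset)
  moreover have "inj_on coset ?D"
  proof
    fix y1 y2 assume y: "y1 \<in> ?D" "y2 \<in> ?D" "coset y1 = coset y2"
    have "y1 \<in> coset y2"
      using y(3) assms(2) unfolding coset_def subgrp_def by force
    then obtain z where z: "z \<in> U" "y1 = y2 + z"
      unfolding coset_def by blast
    then have "z \<in> torsion"
      using y(1,2) torsion_diff[of y1 y2] by (simp add: add.commute)
    then show "y1 = y2"
      using assms(3) z by auto
  qed
  ultimately show ?thesis
    by (rule finite_imageD)
qed

text \<open>As \<open>U\<close> is closed under \<open>m/n\<close>, \<open>f(x)\<close> differs from some \<open>w \<in> U\<close> by a torsion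
  element of \<open>f(U) + U\<close>, which \<open>e\<close> kills.\<close>
lemma invariant_nmul_image:
  assumes endo: "is_endo f" and U: "subgrp U" and "n \<noteq> 0"
    and mult: "\<And>x. imul n (f x) - imul m x \<in> torsion"
    and div: "\<And>x. x \<in> U \<Longrightarrow> \<exists>w\<in>U. imul n w = imul m x"
    and kill: "\<And>x. x \<in> torsion \<Longrightarrow> \<exists>a\<in>U. \<exists>b\<in>U. x = f a + b \<Longrightarrow> nmul e x = 0"
  shows "f ` nmul e ` U \<subseteq> nmul e ` U"
proof
  fix y assume "y \<in> f ` nmul e ` U"
  then obtain x where x: "x \<in> U" "y = f (nmul e x)"
    by blast
  obtain w where w: "w \<in> U" "imul n w = imul m x"
    using div[OF x(1)] by blast
  have "imul n (f x - w) = imul n (f x) - imul m x"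
    using w(2) by (simp add: imul_diff)
  then have "f x - w \<in> torsion"
    using mult torsion_imul_cancel \<open>n \<noteq> 0\<close> by metis
  moreover have "- w \<in> U"
    using U w(1) unfolding subgrp_def by blast
  ultimately have "nmul e (f x - w) = 0"
    using kill x(1) by fastforce
  then have "y = nmul e w"
    using x(2) endo by (simp add: endo_nmul nmul_diff)
  then show "y \<in> nmul e ` U"
    using w(1) by blast
qed

lemma ex_invariant_nmul_image:
  fixes phi :: "nat \<Rightarrow> 'a::ab_group_add \<Rightarrow> 'a"
  assumes U: "subgrp U" "U \<inter> torsion = {0}"
    and endo: "\<And>i. i < t \<Longrightarrow> is_endo (phi i)"
    and inert: "\<And>i. i < t \<Longrightarrow> inertial (phi i)"
    and nz: "\<And>i. i < t \<Longrightarrow> n i \<noteq> 0"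
    and mult: "\<And>i x. i < t \<Longrightarrow> imul (n i) (phi i x) - imul (m i) x \<in> torsion"
    and div: "\<And>i x. i < t \<Longrightarrow> x \<in> U \<Longrightarrow> \<exists>w\<in>U. imul (n i) w = imul (m i) x"
  shows "\<exists>e>0. \<forall>i<t. phi i ` nmul e ` U \<subseteq> nmul e ` U"
proof -
  define D where "D = (\<Union>i<t. {x \<in> torsion. \<exists>a\<in>U. \<exists>b\<in>U. x = phi i a + b})"
  have "finite D" "D \<subseteq> torsion"
    unfolding D_def using inertial_finite_torsion_translates[OF inert U] by auto
  then obtain e where "e > 0" and e: "\<And>x. x \<in> D \<Longrightarrow> nmul e x = 0"
    by (rule finite_torsion_annihilator) blast
  have "phi i ` nmul e ` U \<subseteq> nmul e ` U" if "i < t" for i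
    by (rule invariant_nmul_image[OF endo U(1) nz mult div]) (use e that in \<open>auto simp: D_def\<close>)
  then show ?thesis
    using \<open>e > 0\<close> by blast
qed

lemma subgrp_nmul_image:
  assumes "subgrp U"
  shows "subgrp (nmul e ` U)"
  unfolding subgrp_def
proof (intro conjI ballI)
  show "0 \<in> nmul e ` U"
    using assms nmul_zero[of e] unfolding subgrp_def by (metis image_eqI)
next
  fix x y assume "x \<in> nmul e ` U" "y \<in> nmul e ` U"
  then show "x + y \<in> nmul e ` U"
    using assms unfolding subgrp_def by (auto simp: nmul_add [symmetric] intro!: imageI)
next
  fix x assume "x \<in> nmul e ` U"
  then show "- x \<in> nmul e ` U"
    using assms unfolding subgrp_def by (auto simp: nmul_minus [symmetric] intro!: imageI)
qed

lemma grp_iso_to_nmul_image: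
  assumes U: "subgrp U" "grp_iso_to B U" "U \<inter> torsion = {0}"
    and "e > 0"
  shows "grp_iso_to B (nmul e ` U)"
proof -
  obtain f where f: "bij_betw f B U" "\<And>x y. x \<in> B \<Longrightarrow> y \<in> B \<Longrightarrow> f (\<lambda>i. x i + y i) = f x + f y"
    using U(2) unfolding grp_iso_to_def by blast
  have "inj_on (nmul e) U"
  proof
    fix x y assume xy: "x \<in> U" "y \<in> U" "nmul e x = nmul e y"
    then have "x - y \<in> U"
      using U(1) unfolding subgrp_def by (metis diff_conv_add_uminus)
    moreover have "x - y \<in> torsion"
      using xy(3) \<open>e > 0\<close> unfolding torsion_def by (auto simp: nmul_diff)
    ultimately have "x - y \<in> U \<inter> torsion"
      by blast
    then show "x = y"
      using U(3) by simp
  qed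
  then have "bij_betw (nmul e \<circ> f) B (nmul e ` U)"
    using f(1) bij_betw_comp_iff inj_on_imp_bij_betw by blast
  then show ?thesis
    unfolding grp_iso_to_def using f(2) by (intro exI[of _ "nmul e \<circ> f"]) (simp add: nmul_add)
qed

lemma periodic_nmul_image:
  assumes "\<And>a. \<exists>k>0. nmul k a \<in> U" "e > 0"
  shows "\<exists>k>0. nmul k a \<in> nmul e ` U"
proof -
  obtain k where "k > 0" "nmul k a \<in> U"
    using assms(1) by blast
  then have "nmul (e * k) a \<in> nmul e ` U"
    by (simp add: nmul_mult)
  then show ?thesis
    using \<open>k > 0\<close> \<open>e > 0\<close> by (metis nat_0_less_mult_iff)
qed

theorem lemma5p1:
  fixes phi :: "nat \<Rightarrow> 'a::ab_group_add \<Rightarrow> 'a"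
    and t :: nat and m n :: "nat \<Rightarrow> int"
  assumes rank: "finite_tf_rank TYPE('a)"
    and endo: "\<And>i. i < t \<Longrightarrow> is_endo (phi i)"
    and inert: "\<And>i. i < t \<Longrightarrow> inertial (phi i)"
    and nz: "\<And>i. i < t \<Longrightarrow> n i \<noteq> 0"
    and cop: "\<And>i. i < t \<Longrightarrow> coprime (m i) (n i)"
    and mult: "\<And>i x. i < t \<Longrightarrow> imul (n i) (phi i x) - imul (m i) x \<in> torsion"
  shows "\<exists>V r. subgrp V \<and> (\<forall>i<t. phi i ` V \<subseteq> V)
           \<and> grp_iso_to (Qpi_pow (\<lambda>p. prime p \<and> int p dvd (\<Prod>i<t. n i)) r) V
           \<and> (\<forall>a. \<exists>k>0. nmul k a \<in> V)"
proof -
  define M where "M = (\<Prod>i<t. n i)"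
  have "M \<noteq> 0"
    unfolding M_def using nz by simp
  have "\<exists>th :: 'a \<Rightarrow> 'a. is_endo th \<and> (\<forall>x. imul M (th x) - x \<in> torsion)"
    unfolding M_def by (rule ex_inverse_mod_torsion_of_prod[of t phi m]) (simp_all add: endo cop mult)
  then obtain th :: "'a \<Rightarrow> 'a" where th: "is_endo th" "\<And>x. imul M (th x) - x \<in> torsion"
    by blast
  show ?thesis
  proof (rule ex_torsion_free_Qpi_subgroup[OF rank th(1) \<open>M \<noteq> 0\<close> th(2)])
    fix U :: "'a set" and r
    assume U: "subgrp U" "grp_iso_to (Qpi_pow (\<lambda>p. prime p \<and> int p dvd M) r) U"
      "U \<inter> torsion = {0}"
      and div: "\<And>x. x \<in> U \<Longrightarrow> \<exists>w\<in>U. imul M w = x"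
      and periodic: "\<And>a. \<exists>k>0. nmul k a \<in> U"
    have div_n: "\<exists>w\<in>U. imul (n i) w = imul (m i) x" if "i < t" "x \<in> U" for i x
      using divisible_by_divisor[OF U(1) div _ that(2)] that(1)
      unfolding M_def by (simp add: dvd_prodI)
    have "\<exists>e>0. \<forall>i<t. phi i ` nmul e ` U \<subseteq> nmul e ` U"
      by (rule ex_invariant_nmul_image[where n = n and m = m]) (simp_all add: U(1,3) endo inert nz mult div_n)
    then obtain e where "e > 0" and inv: "\<forall>i<t. phi i ` nmul e ` U \<subseteq> nmul e ` U"
      by blast
    have "subgrp (nmul e ` U) \<and> (\<forall>i<t. phi i ` nmul e ` U \<subseteq> nmul e ` U)
        \<and> grp_iso_to (Qpi_pow (\<lambda>p. prime p \<and> int p dvd M) r) (nmul e ` U)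
        \<and> (\<forall>a. \<exists>k>0. nmul k a \<in> nmul e ` U)"
      using subgrp_nmul_image[OF U(1)] inv grp_iso_to_nmul_image[OF U \<open>e > 0\<close>]
        periodic_nmul_image[OF periodic \<open>e > 0\<close>] by blast
    then show ?thesis
      unfolding M_def by blast
  qed
qed

end
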